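(* Let $f=f_{I+1}\circ\cdots\circ f_1:\mathbb R^{d_1}\to\mathbb R^{d_3}$ be an infinite-width neural network of depth $I\ge1$, viewed as a map $f:\mathbb R^{d_1}\times\mathcal U\to\mathbb R^{d_3}$ of the input $x$ and the parameter $\mu=(\mu_0,\dots,\mu_I)\in\mathcal U$. Then $f$ is continuous (jointly in $x\in\mathbb R^{d_1}$ and $\mu\in\mathcal U$, with the product metric on $\mathbb R^{d_1}\times\mathcal U$).
   Context: Let $\mathcal X_0=\mathbb R^{d_1}$, $\mathcal X_i=\ell^2(\mathbb N)$ for $1\le i\le I$ (sequences indexed by $\{0,1,\dots\}$), $\mathcal X_{I+1}=\mathbb R^{d_3}$; $\Theta_0=\{0,\dots,d_1\}$, $\Theta_i=\mathbb N\cup\{0\}$ for $1\le i\le I$. The layer-$i$ parameter ($i=0,\dots,I$) is a vector measure $\mu_i=\sum_{m\in\Theta_i}w^{i+1}_m\delta_m$ with $w^{i+1}_m\in\mathcal X_{i+1}$ and finite total variation norm $\|\mu_i\|_{TV}=\sum_m\|w^{i+1}_m\|_{\mathcal X_{i+1}}$; these form Banach spaces $\mathcal M(\Theta_i,\mathcal X_{i+1})$, and $\mathcal U=\prod_{i=0}^I\mathcal M(\Theta_i,\mathcal X_{i+1})$ carries the product metric. With $\rho_0(x,0)=1$, $\rho_0(x,n)=x_n$ ($n=1,\dots,d_1$) and, for $i\ge1$, $\rho_i(y,0)=1$, $\rho_i(y,n)=\sigma(y_{n-1})$ ($n\ge1$), the layers are $f_i(y)=\int_{\Theta_{i-1}}\rho_{i-1}(y,\theta)\,d\mu_{i-1}(\theta)=\sum_m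 w^{i}_m\rho_{i-1}(y,m)$, i.e. $f_1(x)=W^1x+b^1$ and $f_{i+1}(y)=W^{i+1}\sigma(y)+b^{i+1}$ with $b^{i+1}=w^{i+1}_0$, $W^{i+1}y=\sum_{m\ge1}w^{i+1}_my_{m-1}$. Here $\sigma$ is the ReLU function applied componentwise. *)

theory Defs
  imports "HOL-Analysis.Analysis"
begin

text \<open>Conventions:
  input space R^d1 = real^'a, output space R^d3 = real^'b;
  the hidden spaces l^2(N) are represented by square-summable sequences nat => real;
  the index set Theta_0 = {0,...,d1} is represented by 'a option
  (None = the bias index 0, Some j = the coordinate index j);
  Theta_i = N for i >= 1.\<close>

definition relu :: "real \<Rightarrow> real" where
  "relu t = max 0 t"

definition l2 :: "(nat \<Rightarrow> real) set" where
  "l2 = {y. summable (\<lambda>n. (y n)^2)}"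

definition l2norm :: "(nat \<Rightarrow> real) \<Rightarrow> real" where
  "l2norm y = sqrt (\<Sum>n. (y n)^2)"

fun rho :: "(nat \<Rightarrow> real) \<Rightarrow> nat \<Rightarrow> real" where
  "rho y 0 = 1"
| "rho y (Suc n) = relu (y n)"

fun rho0 :: "real^'a \<Rightarrow> 'a option \<Rightarrow> real" where
  "rho0 x None = 1"
| "rho0 x (Some j) = x $ j"

text \<open>Parameter measures, given by their weights w_m.\<close>
type_synonym 'a meas0 = "'a option \<Rightarrow> nat \<Rightarrow> real"
type_synonym meas_mid = "nat \<Rightarrow> nat \<Rightarrow> real"
type_synonym 'b meas_out = "nat \<Rightarrow> real^'b"

definition valid0 :: "'a::finite meas0 \<Rightarrow> bool" where
  "valid0 w \<longleftrightarrow> (\<forall>m. w m \<in> l2)"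

definition valid_mid :: "meas_mid \<Rightarrow> bool" where
  "valid_mid w \<longleftrightarrow> (\<forall>m. w m \<in> l2) \<and> summable (\<lambda>m. l2norm (w m))"

definition valid_out :: "'b::finite meas_out \<Rightarrow> bool" where
  "valid_out w \<longleftrightarrow> summable (\<lambda>m. norm (w m))"

definition tv0 :: "'a::finite meas0 \<Rightarrow> real" where
  "tv0 w = (\<Sum>m\<in>UNIV. l2norm (w m))"

definition tv_mid :: "meas_mid \<Rightarrow> real" where
  "tv_mid w = (\<Sum>m. l2norm (w m))"

definition tv_out :: "'b::finite meas_out \<Rightarrow> real" where
  "tv_out w = (\<Sum>m. norm (w m))"

definition layer0 :: "'a::finite meas0 \<Rightarrow> real^'a \<Rightarrow> nat \<Rightarrow> real" where
  "layer0 w x = (\<lambda>k. \<Sum>m\<in>UNIV. rho0 x m * w m k)"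

definition layer_mid :: "meas_mid \<Rightarrow> (nat \<Rightarrow> real) \<Rightarrow> nat \<Rightarrow> real" where
  "layer_mid w y = (\<lambda>k. \<Sum>m. rho y m * w m k)"

definition layer_out :: "'b::finite meas_out \<Rightarrow> (nat \<Rightarrow> real) \<Rightarrow> real^'b" where
  "layer_out w y = (\<Sum>m. rho y m *\<^sub>R w m)"

type_synonym ('a,'b) param = "'a meas0 \<times> meas_mid list \<times> 'b meas_out"

definition params :: "nat \<Rightarrow> ('a::finite,'b::finite) param set" where
  "params I = {(w0, ws, wI). valid0 w0 \<and> length ws = I - 1 \<and>
                 (\<forall>w\<in>set ws. valid_mid w) \<and> valid_out wI}"

definition network :: "('a::finite,'b::finite) param \<Rightarrow> real^'a \<Rightarrow> real^'b" where
  "network p x = (case p of (w0, ws, wI) \<Rightarrow>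
      layer_out wI (fold layer_mid ws (layer0 w0 x)))"

definition param_dist :: "('a::finite,'b::finite) param \<Rightarrow> ('a,'b) param \<Rightarrow> real" where
  "param_dist p q = (case p of (w0, ws, wI) \<Rightarrow> case q of (v0, vs, vI) \<Rightarrow>
      tv0 (\<lambda>m k. w0 m k - v0 m k)
    + (\<Sum>i<length ws. tv_mid (\<lambda>m k. (ws ! i) m k - (vs ! i) m k))
    + tv_out (\<lambda>m. wI m - vI m))"

end

theory Submission
  imports Defs
begin

text \<open>Every layer has the form \<open>y \<mapsto> \<Sum>\<^sub>m \<rho>(y,m) w\<^sub>m\<close>, and writing
  \<open>\<rho>(y',m) v\<^sub>m - \<rho>(y,m) w\<^sub>m = \<rho>(y',m) (v\<^sub>m - w\<^sub>m) + (\<rho>(y',m) - \<rho>(y,m)) w\<^sub>m\<close>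
  bounds the change of its output by \<open>sup |\<rho>(y',\<cdot>)| \<cdot> \<parallel>v - w\<parallel>\<^sub>T\<^sub>V + sup |\<rho>(y',\<cdot>) - \<rho>(y,\<cdot>)| \<cdot> \<parallel>w\<parallel>\<^sub>T\<^sub>V\<close>.
  Since ReLU is 1-Lipschitz and every coordinate of an \<open>\<ell>\<^sup>2\<close> vector is bounded by its norm, it
  suffices to measure the hidden activations in the sup norm: each layer is then jointly
  continuous in its input and its weights, with bounded outputs for bounded inputs, and
  continuity of the whole network follows by induction on the number of hidden layers.\<close>

lemma l2norm_nonneg:
  assumes "u \<in> l2"
  shows "0 \<le> l2norm u"
  using assms unfolding l2norm_def l2_def by (simp add: suminf_nonneg)

lemma abs_le_l2norm:
  assumes "u \<in> l2"
  shows "\<bar>u k\<bar> \<le> l2norm u"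
proof -
  have "(u k)\<^sup>2 \<le> (\<Sum>n. (u n)\<^sup>2)"
    using assms sum_le_suminf[of "\<lambda>n. (u n)\<^sup>2" "{k}"] by (simp add: l2_def)
  then have "sqrt ((u k)\<^sup>2) \<le> l2norm u"
    unfolding l2norm_def by (rule real_sqrt_le_mono)
  then show ?thesis by simp
qed

lemma l2_diff:
  assumes "u \<in> l2" "v \<in> l2"
  shows "(\<lambda>k. u k - v k) \<in> l2"
    and "l2norm (\<lambda>k. u k - v k) \<le> 2 * (l2norm u + l2norm v)"
proof -
  have su: "summable (\<lambda>n. (u n)\<^sup>2)" and sv: "summable (\<lambda>n. (v n)\<^sup>2)"
    using assms by (auto simp: l2_def)
  have pointwise: "(u n - v n)\<^sup>2 \<le> 2 * (u n)\<^sup>2 + 2 * (v n)\<^sup>2" for n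
  proof -
    have "0 \<le> (u n + v n)\<^sup>2" by simp
    then show ?thesis by (simp add: power2_eq_square algebra_simps)
  qed
  have s2: "summable (\<lambda>n. 2 * (u n)\<^sup>2 + 2 * (v n)\<^sup>2)"
    using su sv by (intro summable_add summable_mult)
  have sd: "summable (\<lambda>n. (u n - v n)\<^sup>2)"
    by (rule summable_comparison_test'[OF s2]) (simp add: pointwise)
  then show "(\<lambda>k. u k - v k) \<in> l2" by (simp add: l2_def)
  define A where "A = (\<Sum>n. (u n)\<^sup>2)"
  define B where "B = (\<Sum>n. (v n)\<^sup>2)"
  have A0: "0 \<le> A" and B0: "0 \<le> B"
    unfolding A_def B_def using su sv by (auto intro: suminf_nonneg)
  have "(\<Sum>n. (u n - v n)\<^sup>2) \<le> (\<Sum>n. 2 * (u n)\<^sup>2 + 2 * (v n)\<^sup>2)"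
    by (rule suminf_le[OF pointwise sd s2])
  also have "\<dots> = 2 * A + 2 * B"
    unfolding A_def B_def using su sv by (simp add: suminf_add[symmetric] suminf_mult summable_mult)
  finally have "l2norm (\<lambda>k. u k - v k) \<le> sqrt (2 * A + 2 * B)"
    unfolding l2norm_def by (rule real_sqrt_le_mono)
  also have "\<dots> \<le> sqrt 2 * sqrt A + sqrt 2 * sqrt B"
    using sqrt_add_le_add_sqrt[of "2 * A" "2 * B"] A0 B0 by (simp add: real_sqrt_mult)
  also have "\<dots> \<le> 2 * sqrt A + 2 * sqrt B"
    using A0 B0 by (intro add_mono mult_right_mono) (auto simp: real_sqrt_le_iff')
  finally show "l2norm (\<lambda>k. u k - v k) \<le> 2 * (l2norm u + l2norm v)"
    by (simp add: l2norm_def A_def B_def)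
qed

lemma valid0_diff:
  assumes "valid0 v" "valid0 w"
  shows "valid0 (\<lambda>m k. v m k - w m k)"
  using assms by (simp add: valid0_def l2_diff)

lemma valid_mid_diff:
  assumes "valid_mid v" "valid_mid w"
  shows "valid_mid (\<lambda>m k. v m k - w m k)"
proof -
  have v: "\<And>m. v m \<in> l2" "summable (\<lambda>m. l2norm (v m))"
    and w: "\<And>m. w m \<in> l2" "summable (\<lambda>m. l2norm (w m))"
    using assms by (auto simp: valid_mid_def)
  have "summable (\<lambda>m. l2norm (\<lambda>k. v m k - w m k))"
  proof (rule summable_comparison_test')
    show "summable (\<lambda>m. 2 * (l2norm (v m) + l2norm (w m)))"
      using v w by (intro summable_mult summable_add)
    show "norm (l2norm (\<lambda>k. v m k - w m k)) \<le> 2 * (l2norm (v m) + l2norm (w m))" for m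
      using l2_diff[OF v(1) w(1)] l2norm_nonneg by simp
  qed
  then show ?thesis using v w by (simp add: valid_mid_def l2_diff)
qed

lemma valid_out_diff:
  assumes "valid_out v" "valid_out w"
  shows "valid_out (\<lambda>m. v m - w m)"
  unfolding valid_out_def
proof (rule summable_comparison_test')
  show "summable (\<lambda>m. norm (v m) + norm (w m))"
    using assms by (intro summable_add) (auto simp: valid_out_def)
qed (simp add: norm_triangle_ineq4)

lemma tv0_nonneg: "valid0 w \<Longrightarrow> 0 \<le> tv0 w"
  unfolding tv0_def valid0_def by (simp add: sum_nonneg l2norm_nonneg)

lemma tv_mid_nonneg: "valid_mid w \<Longrightarrow> 0 \<le> tv_mid w"
  unfolding tv_mid_def valid_mid_def by (simp add: suminf_nonneg l2norm_nonneg)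

lemma tv_out_nonneg: "valid_out w \<Longrightarrow> 0 \<le> tv_out w"
  unfolding tv_out_def valid_out_def by (simp add: suminf_nonneg)

lemma sum_abs_coord_le_tv0:
  assumes "valid0 w"
  shows "(\<Sum>m\<in>UNIV. \<bar>w m k\<bar>) \<le> tv0 w"
  using assms unfolding tv0_def valid0_def by (intro sum_mono abs_le_l2norm) simp

lemma suminf_abs_coord_le_tv_mid:
  assumes "valid_mid w"
  shows "summable (\<lambda>m. \<bar>w m k\<bar>)" and "(\<Sum>m. \<bar>w m k\<bar>) \<le> tv_mid w"
proof -
  have w: "\<And>m. w m \<in> l2" "summable (\<lambda>m. l2norm (w m))"
    using assms by (auto simp: valid_mid_def)
  show s: "summable (\<lambda>m. \<bar>w m k\<bar>)"
    by (rule summable_comparison_test'[OF w(2)]) (simp add: abs_le_l2norm[OF w(1)])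
  show "(\<Sum>m. \<bar>w m k\<bar>) \<le> tv_mid w"
    unfolding tv_mid_def by (rule suminf_le[OF abs_le_l2norm[OF w(1)] s w(2)])
qed

lemma norm_scaleR_diff_le:
  fixes f g :: "'c::real_normed_vector"
  assumes "\<bar>b\<bar> \<le> A" "\<bar>b - a\<bar> \<le> d"
  shows "norm (b *\<^sub>R g - a *\<^sub>R f) \<le> A * norm (g - f) + d * norm f"
proof -
  have "b *\<^sub>R g - a *\<^sub>R f = b *\<^sub>R (g - f) + (b - a) *\<^sub>R f"
    by (simp add: algebra_simps)
  then have "norm (b *\<^sub>R g - a *\<^sub>R f) \<le> \<bar>b\<bar> * norm (g - f) + \<bar>b - a\<bar> * norm f"
    by (metis norm_scaleR norm_triangle_ineq)
  also have "\<dots> \<le> A * norm (g - f) + d * norm f"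
    using assms by (intro add_mono mult_right_mono) auto
  finally show ?thesis .
qed

lemma norm_suminf_scaleR_diff_le:
  fixes f g :: "nat \<Rightarrow> 'c::banach"
  assumes f: "summable (\<lambda>m. norm (f m))" and gf: "summable (\<lambda>m. norm (g m - f m))"
    and b: "\<And>m. \<bar>b m\<bar> \<le> A" and ba: "\<And>m. \<bar>b m - a m\<bar> \<le> d"
  shows "norm ((\<Sum>m. b m *\<^sub>R g m) - (\<Sum>m. a m *\<^sub>R f m))
           \<le> A * (\<Sum>m. norm (g m - f m)) + d * (\<Sum>m. norm (f m))"
proof -
  have bound: "summable (\<lambda>m. A * norm (g m - f m) + d * norm (f m))"
    using f gf by (intro summable_add summable_mult)
  have diff: "summable (\<lambda>m. b m *\<^sub>R g m - a m *\<^sub>R f m)"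
    by (rule summable_comparison_test'[OF bound]) (rule norm_scaleR_diff_le[OF b ba])
  have af: "summable (\<lambda>m. a m *\<^sub>R f m)"
  proof (rule summable_comparison_test'[OF summable_mult[OF f, of "A + d"]])
    fix m
    have "\<bar>a m\<bar> \<le> A + d" using b[of m] ba[of m] by linarith
    then show "norm (a m *\<^sub>R f m) \<le> (A + d) * norm (f m)"
      by (simp add: mult_right_mono)
  qed
  have bg: "summable (\<lambda>m. b m *\<^sub>R g m)"
    using summable_add[OF diff af] by simp
  have "norm ((\<Sum>m. b m *\<^sub>R g m) - (\<Sum>m. a m *\<^sub>R f m)) = norm (\<Sum>m. b m *\<^sub>R g m - a m *\<^sub>R f m)"
    by (simp add: suminf_diff[OF bg af])
  also have "\<dots> \<le> (\<Sum>m. A * norm (g m - f m) + d * norm (f m))"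
    by (rule norm_suminf_le[OF norm_scaleR_diff_le[OF b ba] bound])
  also have "\<dots> = A * (\<Sum>m. norm (g m - f m)) + d * (\<Sum>m. norm (f m))"
    using f gf by (simp add: suminf_add[symmetric] suminf_mult summable_mult)
  finally show ?thesis .
qed

lemma abs_relu_le: "\<bar>relu t\<bar> \<le> \<bar>t\<bar>"
  and abs_relu_diff_le: "\<bar>relu s - relu t\<bar> \<le> \<bar>s - t\<bar>"
  unfolding relu_def by auto

lemma abs_rho_le:
  assumes "\<And>k. \<bar>y k\<bar> \<le> B"
  shows "\<bar>rho y m\<bar> \<le> 1 + B"
proof (cases m)
  case 0
  then show ?thesis using assms[of 0] by simp
next
  case (Suc n)
  then show ?thesis using abs_relu_le[of "y n"] assms[of n] by simp
qed

lemma abs_rho_diff_le: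
  assumes "\<And>k. \<bar>y' k - y k\<bar> \<le> d"
  shows "\<bar>rho y' m - rho y m\<bar> \<le> d"
proof (cases m)
  case 0
  then show ?thesis using assms[of 0] by simp
next
  case (Suc n)
  then show ?thesis using abs_relu_diff_le[of "y' n" "y n"] assms[of n] by simp
qed

lemma abs_rho0_le: "\<bar>rho0 x m\<bar> \<le> 1 + norm x"
  by (cases m) (auto intro: order_trans[OF component_le_norm_cart])

lemma abs_rho0_diff_le: "\<bar>rho0 x' m - rho0 x m\<bar> \<le> dist x' x"
  by (cases m) (auto simp: dist_norm intro: order_trans[OF _ component_le_norm_cart])

lemma abs_layer0_le:
  assumes "valid0 w"
  shows "\<bar>layer0 w x k\<bar> \<le> (1 + norm x) * tv0 w"
proof -
  have "\<bar>layer0 w x k\<bar> \<le> (\<Sum>m\<in>UNIV. \<bar>rho0 x m\<bar> * \<bar>w m k\<bar>)"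
    unfolding layer0_def abs_mult[symmetric] by (rule sum_abs)
  also have "\<dots> \<le> (\<Sum>m\<in>UNIV. (1 + norm x) * \<bar>w m k\<bar>)"
    by (intro sum_mono mult_right_mono abs_rho0_le) simp
  also have "\<dots> = (1 + norm x) * (\<Sum>m\<in>UNIV. \<bar>w m k\<bar>)"
    by (simp add: sum_distrib_left)
  also have "\<dots> \<le> (1 + norm x) * tv0 w"
    by (intro mult_left_mono sum_abs_coord_le_tv0[OF assms]) simp
  finally show ?thesis .
qed

lemma abs_layer0_diff_le:
  assumes "valid0 v" "valid0 w"
  shows "\<bar>layer0 v x' k - layer0 w x k\<bar>
           \<le> (1 + norm x + dist x' x) * tv0 (\<lambda>m k. v m k - w m k) + dist x' x * tv0 w"
proof -
  let ?A = "1 + norm x + dist x' x"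
  have "norm x' \<le> norm x + dist x' x"
    by (metis dist_norm norm_triangle_sub)
  then have rho_le: "\<bar>rho0 x' m\<bar> \<le> ?A" for m
    using abs_rho0_le[of x' m] by linarith
  have "\<bar>layer0 v x' k - layer0 w x k\<bar> = \<bar>\<Sum>m\<in>UNIV. rho0 x' m * v m k - rho0 x m * w m k\<bar>"
    unfolding layer0_def by (simp add: sum_subtractf)
  also have "\<dots> \<le> (\<Sum>m\<in>UNIV. ?A * \<bar>v m k - w m k\<bar> + dist x' x * \<bar>w m k\<bar>)"
  proof (rule order_trans[OF sum_abs sum_mono])
    show "\<bar>rho0 x' m * v m k - rho0 x m * w m k\<bar> \<le> ?A * \<bar>v m k - w m k\<bar> + dist x' x * \<bar>w m k\<bar>" for m
      using norm_scaleR_diff_le[OF rho_le abs_rho0_diff_le, where g="v m k" and f="w m k"] by simp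
  qed
  also have "\<dots> \<le> ?A * tv0 (\<lambda>m k. v m k - w m k) + dist x' x * tv0 w"
    using sum_abs_coord_le_tv0[OF valid0_diff[OF assms], of k] sum_abs_coord_le_tv0[OF assms(2), of k]
    by (simp add: sum.distrib sum_distrib_left[symmetric] add_mono mult_left_mono)
  finally show ?thesis .
qed

lemma abs_layer_mid_le:
  assumes "valid_mid w" "\<And>k. \<bar>y k\<bar> \<le> B"
  shows "\<bar>layer_mid w y k\<bar> \<le> (1 + B) * tv_mid w"
proof -
  note w = suminf_abs_coord_le_tv_mid[OF assms(1), of k]
  have "0 \<le> 1 + B" using assms(2)[of 0] by linarith
  have "\<bar>layer_mid w y k\<bar> \<le> (\<Sum>m. (1 + B) * \<bar>w m k\<bar>)"
    unfolding layer_mid_def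
    by (rule norm_suminf_le[where 'a=real, simplified, OF _ summable_mult[OF w(1)]])
       (simp add: abs_mult mult_right_mono abs_rho_le[OF assms(2)])
  also have "\<dots> \<le> (1 + B) * tv_mid w"
    using w \<open>0 \<le> 1 + B\<close> by (simp add: suminf_mult mult_left_mono)
  finally show ?thesis .
qed

lemma abs_layer_mid_diff_le:
  assumes "valid_mid v" "valid_mid w" "\<And>k. \<bar>y k\<bar> \<le> B" "\<And>k. \<bar>y' k - y k\<bar> \<le> d"
  shows "\<bar>layer_mid v y' k - layer_mid w y k\<bar>
           \<le> (1 + B + d) * tv_mid (\<lambda>m k. v m k - w m k) + d * tv_mid w"
proof -
  note w = suminf_abs_coord_le_tv_mid[OF assms(2), of k]
  note vw = suminf_abs_coord_le_tv_mid[OF valid_mid_diff[OF assms(1,2)], of k]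
  have "\<bar>y' k\<bar> \<le> B + d" for k
    using assms(3,4)[of k] by arith
  then have rho_le: "\<bar>rho y' m\<bar> \<le> 1 + B + d" for m
    using abs_rho_le by (simp add: add.assoc)
  have "0 \<le> 1 + B + d" using assms(3,4)[of 0] by arith
  have "\<bar>layer_mid v y' k - layer_mid w y k\<bar>
          \<le> (1 + B + d) * (\<Sum>m. \<bar>v m k - w m k\<bar>) + d * (\<Sum>m. \<bar>w m k\<bar>)"
    using norm_suminf_scaleR_diff_le[where f="\<lambda>m. w m k" and g="\<lambda>m. v m k",
        OF _ _ rho_le abs_rho_diff_le[OF assms(4)]] w(1) vw(1)
    by (simp add: layer_mid_def)
  also have "\<dots> \<le> (1 + B + d) * tv_mid (\<lambda>m k. v m k - w m k) + d * tv_mid w"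
    using w(2) vw(2) \<open>0 \<le> 1 + B + d\<close> assms(4)[of 0]
    by (intro add_mono mult_left_mono) auto
  finally show ?thesis .
qed

lemma dist_layer_out_le:
  assumes "valid_out v" "valid_out w" "\<And>k. \<bar>y k\<bar> \<le> B" "\<And>k. \<bar>y' k - y k\<bar> \<le> d"
  shows "dist (layer_out v y') (layer_out w y)
           \<le> (1 + B + d) * tv_out (\<lambda>m. v m - w m) + d * tv_out w"
proof -
  have "\<bar>y' k\<bar> \<le> B + d" for k
    using assms(3,4)[of k] by arith
  then have rho_le: "\<bar>rho y' m\<bar> \<le> 1 + B + d" for m
    using abs_rho_le by (simp add: add.assoc)
  show ?thesis
    using norm_suminf_scaleR_diff_le[OF _ _ rho_le abs_rho_diff_le[OF assms(4)]]
      valid_out_diff[OF assms(1,2)] assms(2)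
    by (simp add: layer_out_def tv_out_def valid_out_def dist_norm)
qed

lemma perturbation_bound_small:
  fixes C D \<epsilon> :: real
  assumes "0 \<le> C" "0 \<le> D" "0 < \<epsilon>"
  obtains \<delta> where "0 < \<delta>" "\<And>d t. 0 \<le> d \<Longrightarrow> d \<le> \<delta> \<Longrightarrow> t \<le> \<delta> \<Longrightarrow> (C + d) * t + d * D < \<epsilon>"
proof
  define \<delta> where "\<delta> = min 1 (\<epsilon> / (C + D + 2))"
  show "0 < \<delta>" using assms by (simp add: \<delta>_def)
  fix d t :: real
  assume d: "0 \<le> d" "d \<le> \<delta>" and t: "t \<le> \<delta>"
  have "(C + d) * t \<le> (C + d) * \<delta>"
    using assms d t by (intro mult_left_mono) auto
  also have "\<dots> \<le> (C + 1) * \<delta>"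
    using \<open>0 < \<delta>\<close> d by (intro mult_right_mono) (auto simp: \<delta>_def)
  finally have "(C + d) * t + d * D \<le> (C + 1) * \<delta> + \<delta> * D"
    using assms d by (intro add_mono mult_right_mono) auto
  also have "\<dots> < (C + D + 2) * \<delta>"
    using \<open>0 < \<delta>\<close> by (simp add: algebra_simps)
  also have "\<dots> \<le> \<epsilon>"
    using assms min.cobounded2[of 1 "\<epsilon> / (C + D + 2)"] by (simp add: \<delta>_def le_divide_eq mult.commute)
  finally show "(C + d) * t + d * D < \<epsilon>" .
qed

lemma network_tail_continuous:
  assumes "\<forall>w\<in>set ws. valid_mid w" "valid_out wI" "\<And>k. \<bar>y k\<bar> \<le> B" "0 < \<epsilon>"
  shows "\<exists>\<delta>>0. \<forall>y' vs vI. (\<forall>v\<in>set vs. valid_mid v) \<longrightarrow> valid_out vI \<longrightarrow>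
           list_all2 (\<lambda>v w. tv_mid (\<lambda>m k. v m k - w m k) \<le> \<delta>) vs ws \<longrightarrow>
           tv_out (\<lambda>m. vI m - wI m) \<le> \<delta> \<longrightarrow> (\<forall>k. \<bar>y' k - y k\<bar> \<le> \<delta>) \<longrightarrow>
           dist (layer_out vI (fold layer_mid vs y')) (layer_out wI (fold layer_mid ws y)) < \<epsilon>"
  using assms(1,3)
proof (induction ws arbitrary: y B)
  case Nil
  have "0 \<le> 1 + B" using Nil(2)[of 0] by linarith
  then obtain \<delta> where "0 < \<delta>"
    and small: "\<And>d t. 0 \<le> d \<Longrightarrow> d \<le> \<delta> \<Longrightarrow> t \<le> \<delta> \<Longrightarrow> (1 + B + d) * t + d * tv_out wI < \<epsilon>"
    using perturbation_bound_small tv_out_nonneg[OF assms(2)] assms(4) by blast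
  show ?case
  proof (intro exI[of _ \<delta>] conjI allI impI)
    fix y' vs vI
    assume vI: "valid_out vI" and "list_all2 (\<lambda>v w. tv_mid (\<lambda>m k. v m k - w m k) \<le> \<delta>) vs []"
      and out: "tv_out (\<lambda>m. vI m - wI m) \<le> \<delta>" and dy: "\<forall>k. \<bar>y' k - y k\<bar> \<le> \<delta>"
    then have "vs = []" by simp
    have "dist (layer_out vI y') (layer_out wI y) \<le> (1 + B + \<delta>) * tv_out (\<lambda>m. vI m - wI m) + \<delta> * tv_out wI"
      using vI assms(2) Nil(2) dy by (intro dist_layer_out_le) auto
    also have "\<dots> < \<epsilon>"
      using small \<open>0 < \<delta>\<close> out by simp
    finally show "dist (layer_out vI (fold layer_mid vs y')) (layer_out wI (fold layer_mid [] y)) < \<epsilon>"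
      using \<open>vs = []\<close> by simp
  qed (fact \<open>0 < \<delta>\<close>)
next
  case (Cons w ws)
  have w: "valid_mid w" and ws: "\<forall>w\<in>set ws. valid_mid w"
    using Cons.prems(1) by auto
  obtain \<delta>1 where "0 < \<delta>1" and tail: "\<forall>y' vs vI. (\<forall>v\<in>set vs. valid_mid v) \<longrightarrow> valid_out vI \<longrightarrow>
           list_all2 (\<lambda>v w. tv_mid (\<lambda>m k. v m k - w m k) \<le> \<delta>1) vs ws \<longrightarrow>
           tv_out (\<lambda>m. vI m - wI m) \<le> \<delta>1 \<longrightarrow> (\<forall>k. \<bar>y' k - layer_mid w y k\<bar> \<le> \<delta>1) \<longrightarrow>
           dist (layer_out vI (fold layer_mid vs y')) (layer_out wI (fold layer_mid ws (layer_mid w y))) < \<epsilon>"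
  proof -
    have "\<bar>layer_mid w y k\<bar> \<le> (1 + B) * tv_mid w" for k
      by (rule abs_layer_mid_le[OF w Cons.prems(2)])
    then show ?thesis using Cons.IH[OF ws] that by blast
  qed
  have "0 \<le> 1 + B" using Cons.prems(2)[of 0] by linarith
  then obtain \<delta>2 where "0 < \<delta>2"
    and small: "\<And>d t. 0 \<le> d \<Longrightarrow> d \<le> \<delta>2 \<Longrightarrow> t \<le> \<delta>2 \<Longrightarrow> (1 + B + d) * t + d * tv_mid w < \<delta>1"
    using perturbation_bound_small tv_mid_nonneg[OF w] \<open>0 < \<delta>1\<close> by blast
  define \<delta> where "\<delta> = min \<delta>1 \<delta>2"
  show ?case
  proof (intro exI[of _ \<delta>] conjI allI impI)
    show "0 < \<delta>" using \<open>0 < \<delta>1\<close> \<open>0 < \<delta>2\<close> by (simp add: \<delta>_def)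
    fix y' vs vI
    assume vs: "\<forall>v\<in>set vs. valid_mid v" and vI: "valid_out vI"
      and close: "list_all2 (\<lambda>v w. tv_mid (\<lambda>m k. v m k - w m k) \<le> \<delta>) vs (w # ws)"
      and out: "tv_out (\<lambda>m. vI m - wI m) \<le> \<delta>" and dy: "\<forall>k. \<bar>y' k - y k\<bar> \<le> \<delta>"
    obtain v vs' where vs_eq: "vs = v # vs'" and head: "tv_mid (\<lambda>m k. v m k - w m k) \<le> \<delta>"
      and rest: "list_all2 (\<lambda>v w. tv_mid (\<lambda>m k. v m k - w m k) \<le> \<delta>) vs' ws"
      using close by (cases vs) auto
    have v: "valid_mid v" using vs vs_eq by simp
    have hidden: "\<bar>layer_mid v y' k - layer_mid w y k\<bar> \<le> \<delta>1" for k
    proof -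
      have "\<bar>layer_mid v y' k - layer_mid w y k\<bar>
              \<le> (1 + B + \<delta>) * tv_mid (\<lambda>m k. v m k - w m k) + \<delta> * tv_mid w"
        using v w Cons.prems(2) dy by (intro abs_layer_mid_diff_le) auto
      also have "\<dots> < \<delta>1"
        using small \<open>0 < \<delta>\<close> head by (simp add: \<delta>_def)
      finally show ?thesis by simp
    qed
    have "list_all2 (\<lambda>v w. tv_mid (\<lambda>m k. v m k - w m k) \<le> \<delta>1) vs' ws"
      using rest by (rule list_all2_mono) (simp add: \<delta>_def)
    then show "dist (layer_out vI (fold layer_mid vs y')) (layer_out wI (fold layer_mid (w # ws) y)) < \<epsilon>"
      using tail vs vI out hidden by (simp add: vs_eq \<delta>_def)
  qed
qed

lemma network_continuous_componentwise:
  assumes "valid0 w0" "\<forall>w\<in>set ws. valid_mid w" "valid_out wI" "0 < \<epsilon>"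
  shows "\<exists>\<delta>>0. \<forall>x' v0 vs vI. valid0 v0 \<longrightarrow> (\<forall>v\<in>set vs. valid_mid v) \<longrightarrow> valid_out vI \<longrightarrow>
           tv0 (\<lambda>m k. v0 m k - w0 m k) \<le> \<delta> \<longrightarrow>
           list_all2 (\<lambda>v w. tv_mid (\<lambda>m k. v m k - w m k) \<le> \<delta>) vs ws \<longrightarrow>
           tv_out (\<lambda>m. vI m - wI m) \<le> \<delta> \<longrightarrow> dist x' x \<le> \<delta> \<longrightarrow>
           dist (network (v0, vs, vI) x') (network (w0, ws, wI) x) < \<epsilon>"
proof -
  have "\<bar>layer0 w0 x k\<bar> \<le> (1 + norm x) * tv0 w0" for k
    by (rule abs_layer0_le[OF assms(1)])
  then obtain \<delta>1 where "0 < \<delta>1" and tail: "\<forall>y' vs vI. (\<forall>v\<in>set vs. valid_mid v) \<longrightarrow> valid_out vI \<longrightarrow>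
           list_all2 (\<lambda>v w. tv_mid (\<lambda>m k. v m k - w m k) \<le> \<delta>1) vs ws \<longrightarrow>
           tv_out (\<lambda>m. vI m - wI m) \<le> \<delta>1 \<longrightarrow> (\<forall>k. \<bar>y' k - layer0 w0 x k\<bar> \<le> \<delta>1) \<longrightarrow>
           dist (layer_out vI (fold layer_mid vs y')) (layer_out wI (fold layer_mid ws (layer0 w0 x))) < \<epsilon>"
    using network_tail_continuous[OF assms(2,3) _ assms(4)] by blast
  obtain \<delta>2 where "0 < \<delta>2"
    and small: "\<And>d t. 0 \<le> d \<Longrightarrow> d \<le> \<delta>2 \<Longrightarrow> t \<le> \<delta>2 \<Longrightarrow> (1 + norm x + d) * t + d * tv0 w0 < \<delta>1"
    using perturbation_bound_small[of "1 + norm x" "tv0 w0" \<delta>1] tv0_nonneg[OF assms(1)] \<open>0 < \<delta>1\<close>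
    by (metis add_nonneg_nonneg norm_ge_zero zero_le_one)
  define \<delta> where "\<delta> = min \<delta>1 \<delta>2"
  show ?thesis
  proof (intro exI[of _ \<delta>] conjI allI impI)
    show "0 < \<delta>" using \<open>0 < \<delta>1\<close> \<open>0 < \<delta>2\<close> by (simp add: \<delta>_def)
    fix x' v0 vs vI
    assume v0: "valid0 v0" and vs: "\<forall>v\<in>set vs. valid_mid v" and vI: "valid_out vI"
      and first: "tv0 (\<lambda>m k. v0 m k - w0 m k) \<le> \<delta>"
      and close: "list_all2 (\<lambda>v w. tv_mid (\<lambda>m k. v m k - w m k) \<le> \<delta>) vs ws"
      and out: "tv_out (\<lambda>m. vI m - wI m) \<le> \<delta>" and dx: "dist x' x \<le> \<delta>"
    have hidden: "\<bar>layer0 v0 x' k - layer0 w0 x k\<bar> \<le> \<delta>1" for k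
    proof -
      have "\<bar>layer0 v0 x' k - layer0 w0 x k\<bar>
              \<le> (1 + norm x + dist x' x) * tv0 (\<lambda>m k. v0 m k - w0 m k) + dist x' x * tv0 w0"
        by (rule abs_layer0_diff_le[OF v0 assms(1)])
      also have "\<dots> < \<delta>1"
        using small first dx by (simp add: \<delta>_def)
      finally show ?thesis by simp
    qed
    have "list_all2 (\<lambda>v w. tv_mid (\<lambda>m k. v m k - w m k) \<le> \<delta>1) vs ws"
      using close by (rule list_all2_mono) (simp add: \<delta>_def)
    then show "dist (network (v0, vs, vI) x') (network (w0, ws, wI) x) < \<epsilon>"
      using tail vs vI out hidden by (simp add: network_def \<delta>_def)
  qed
qed

lemma param_dist_bounds_components:
  assumes "(v0, vs, vI) \<in> params I" "(w0, ws, wI) \<in> params I"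
  defines "D \<equiv> param_dist (v0, vs, vI) (w0, ws, wI)"
  shows "0 \<le> D" and "tv0 (\<lambda>m k. v0 m k - w0 m k) \<le> D"
    and "list_all2 (\<lambda>v w. tv_mid (\<lambda>m k. v m k - w m k) \<le> D) vs ws"
    and "tv_out (\<lambda>m. vI m - wI m) \<le> D"
proof -
  have len: "length vs = length ws" and
    valid: "valid0 v0" "valid0 w0" "\<forall>v\<in>set vs. valid_mid v" "\<forall>w\<in>set ws. valid_mid w"
      "valid_out vI" "valid_out wI"
    using assms(1,2) by (auto simp: params_def)
  define TM where "TM i = tv_mid (\<lambda>m k. (vs ! i) m k - (ws ! i) m k)" for i
  have T0: "0 \<le> tv0 (\<lambda>m k. v0 m k - w0 m k)"
    using valid by (intro tv0_nonneg valid0_diff)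
  have TO: "0 \<le> tv_out (\<lambda>m. vI m - wI m)"
    using valid by (intro tv_out_nonneg valid_out_diff)
  have TM: "0 \<le> TM i" if "i < length vs" for i
    unfolding TM_def using valid that len by (intro tv_mid_nonneg valid_mid_diff) auto
  have TM_le: "TM i \<le> (\<Sum>j<length vs. TM j)" if "i < length vs" for i
    using that TM by (intro member_le_sum) auto
  have D_eq: "D = tv0 (\<lambda>m k. v0 m k - w0 m k) + (\<Sum>i<length vs. TM i) + tv_out (\<lambda>m. vI m - wI m)"
    by (simp add: D_def param_dist_def TM_def)
  have sum_nonneg: "0 \<le> (\<Sum>i<length vs. TM i)"
    using TM by (intro sum_nonneg) auto
  show "0 \<le> D" and "tv0 (\<lambda>m k. v0 m k - w0 m k) \<le> D" and "tv_out (\<lambda>m. vI m - wI m) \<le> D"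
    using D_eq T0 TO sum_nonneg by linarith+
  have "TM i \<le> D" if "i < length vs" for i
    using TM_le[OF that] D_eq T0 TO by linarith
  then show "list_all2 (\<lambda>v w. tv_mid (\<lambda>m k. v m k - w m k) \<le> D) vs ws"
    using len by (simp add: list_all2_conv_all_nth TM_def)
qed

theorem proposition2:
  fixes I :: nat and x :: "real^'a::finite" and p :: "('a, 'b::finite) param"
  assumes "I \<ge> 1" and "p \<in> params I"
  shows "\<forall>\<epsilon>>0. \<exists>\<delta>>0. \<forall>x' q. q \<in> params I \<longrightarrow>
           dist x' x + param_dist q p < \<delta> \<longrightarrow>
           dist (network q x') (network p x) < \<epsilon>"
proof (intro allI impI)
  fix \<epsilon> :: real
  assume "0 < \<epsilon>"
  obtain w0 ws wI where p_eq: "p = (w0, ws, wI)" by (cases p)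
  then have "valid0 w0" "\<forall>w\<in>set ws. valid_mid w" "valid_out wI"
    using assms(2) by (auto simp: params_def)
  then obtain \<delta> where "0 < \<delta>" and close: "\<forall>x' v0 vs vI. valid0 v0 \<longrightarrow> (\<forall>v\<in>set vs. valid_mid v) \<longrightarrow>
           valid_out vI \<longrightarrow> tv0 (\<lambda>m k. v0 m k - w0 m k) \<le> \<delta> \<longrightarrow>
           list_all2 (\<lambda>v w. tv_mid (\<lambda>m k. v m k - w m k) \<le> \<delta>) vs ws \<longrightarrow>
           tv_out (\<lambda>m. vI m - wI m) \<le> \<delta> \<longrightarrow> dist x' x \<le> \<delta> \<longrightarrow>
           dist (network (v0, vs, vI) x') (network (w0, ws, wI) x) < \<epsilon>"
    using network_continuous_componentwise[where x=x, OF _ _ _ \<open>0 < \<epsilon>\<close>] by blast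
  show "\<exists>\<delta>>0. \<forall>x' q. q \<in> params I \<longrightarrow> dist x' x + param_dist q p < \<delta> \<longrightarrow>
          dist (network q x') (network p x) < \<epsilon>"
  proof (intro exI[of _ \<delta>] conjI allI impI)
    fix x' q
    assume q: "q \<in> params I" and small: "dist x' x + param_dist q p < \<delta>"
    obtain v0 vs vI where q_eq: "q = (v0, vs, vI)" by (cases q)
    note D = param_dist_bounds_components[OF q[unfolded q_eq] assms(2)[unfolded p_eq]]
    have "param_dist q p \<le> \<delta>" "dist x' x \<le> \<delta>"
      using small D(1) zero_le_dist[of x' x] unfolding q_eq p_eq by linarith+
    moreover have "list_all2 (\<lambda>v w. tv_mid (\<lambda>m k. v m k - w m k) \<le> \<delta>) vs ws"
      using D(3) by (rule list_all2_mono) (use calculation in \<open>simp add: q_eq p_eq\<close>)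
    moreover have "valid0 v0" "\<forall>v\<in>set vs. valid_mid v" "valid_out vI"
      using q by (auto simp: q_eq params_def)
    ultimately show "dist (network q x') (network p x) < \<epsilon>"
      using close D(2,4) by (simp add: q_eq p_eq)
  qed (fact \<open>0 < \<delta>\<close>)
qed

end
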